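(* Let $11/5\le\gamma\le9$ and consider the SIEMS7 method ($\mathrm{k}=7$) with coefficients defined as in the context. Then $\sigma_{\mathrm{F}}=1$, $\sigma_{\mathrm{E}}=\dfrac{|c(\pi)|}{|a(\pi)|}$, $$\lambda_{\mathrm{I}}=\frac{105(1-2\gamma)^6}{16(420\gamma^6-1050\gamma^4+1400\gamma^3-840\gamma^2+252\gamma-31)},$$ so that $\mathfrak{I}_{\mathrm{IE}}=\dfrac{(1-2\gamma)^6}{64\gamma^6+192\gamma^5-240\gamma^4+160\gamma^3-60\gamma^2+12\gamma-1}$.
   Context: The $\gamma$-parameterized SIEMS-$\mathrm{k}$ method has coefficients $a_j$ ($0\le j\le\mathrm{k}-1$), $b_j$ ($0\le j\le\mathrm{k}$), $c_j$ ($0\le j\le\mathrm{k}-1$) determined by the polynomial identities (in $\zeta$) $\sum_{j=0}^{\mathrm{k}-1}a_j\zeta^{\mathrm{k}-j-1}=\sum_{j=1}^{\mathrm{k}}\frac{f^{(j)}(1)}{j!}(\zeta-1)^{j-1}$ with $f(z)=(\gamma z-\gamma+1)^{\mathrm{k}-1}z\ln z$; $\sum_{j=0}^{\mathrm{k}}b_j\zeta^{\mathrm{k}-j}=\zeta(\gamma\zeta-\gamma+1)^{\mathrm{k}-1}$; $\sum_{j=0}^{\mathrm{k}-1}c_j\zeta^{\mathrm{k}-j-1}=\zeta(\gamma\zeta-\gamma+1)^{\mathrm{k}-1}-\gamma^{\mathrm{k}-1}(\zeta-1)^{\mathrm{k}}$. Define $a(\theta)=\sum_j a_je^{\imath j\theta}$,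 $b(\theta)=\sum_j b_je^{\imath j\theta}$, $c(\theta)=\sum_jc_je^{\imath j\theta}$, $\sigma_{\mathrm{F}}=\max_{\theta\in[0,2\pi)}|1/a(\theta)|$, $\sigma_{\mathrm{E}}=\max_{\theta\in[0,2\pi)}|c(\theta)/a(\theta)|$, $\lambda_{\mathrm{I}}=\min_{\theta\in[0,2\pi)}\Re[b(\theta)/a(\theta)]$, $\mathfrak{I}_{\mathrm{IE}}=\lambda_{\mathrm{I}}/\sigma_{\mathrm{E}}$. *)

theory Defs
  imports "HOL-Analysis.Analysis" "HOL-Computational_Algebra.Polynomial"
begin

definition siems_f :: "nat \<Rightarrow> real \<Rightarrow> real \<Rightarrow> real" where
  "siems_f k \<gamma> z = (\<gamma> * z - \<gamma> + 1) ^ (k - 1) * z * ln z"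

definition siems_A :: "nat \<Rightarrow> real \<Rightarrow> real poly" where
  "siems_A k \<gamma> = (\<Sum>j=1..k. smult (((deriv ^^ j) (siems_f k \<gamma>) 1) / fact j) ([:-1, 1:] ^ (j - 1)))"

definition siems_B :: "nat \<Rightarrow> real \<Rightarrow> real poly" where
  "siems_B k \<gamma> = [:0, 1:] * [:1 - \<gamma>, \<gamma>:] ^ (k - 1)"

definition siems_C :: "nat \<Rightarrow> real \<Rightarrow> real poly" where
  "siems_C k \<gamma> = siems_B k \<gamma> - smult (\<gamma> ^ (k - 1)) ([:-1, 1:] ^ k)"

definition siems_a :: "nat \<Rightarrow> real \<Rightarrow> nat \<Rightarrow> real" where
  "siems_a k \<gamma> j = coeff (siems_A k \<gamma>) (k - j - 1)"

definition siems_b :: "nat \<Rightarrow> real \<Rightarrow> nat \<Rightarrow> real" where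
  "siems_b k \<gamma> j = coeff (siems_B k \<gamma>) (k - j)"

definition siems_c :: "nat \<Rightarrow> real \<Rightarrow> nat \<Rightarrow> real" where
  "siems_c k \<gamma> j = coeff (siems_C k \<gamma>) (k - j - 1)"

definition a_fun :: "nat \<Rightarrow> real \<Rightarrow> real \<Rightarrow> complex" where
  "a_fun k \<gamma> \<theta> = (\<Sum>j<k. of_real (siems_a k \<gamma> j) * cis (real j * \<theta>))"

definition b_fun :: "nat \<Rightarrow> real \<Rightarrow> real \<Rightarrow> complex" where
  "b_fun k \<gamma> \<theta> = (\<Sum>j\<le>k. of_real (siems_b k \<gamma> j) * cis (real j * \<theta>))"

definition c_fun :: "nat \<Rightarrow> real \<Rightarrow> real \<Rightarrow> complex" where
  "c_fun k \<gamma> \<theta> = (\<Sum>j<k. of_real (siems_c k \<gamma> j) * cis (real j * \<theta>))"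

definition sigma_F :: "nat \<Rightarrow> real \<Rightarrow> real" where
  "sigma_F k \<gamma> = (SUP \<theta>\<in>{0..<2*pi}. cmod (1 / a_fun k \<gamma> \<theta>))"

definition sigma_E :: "nat \<Rightarrow> real \<Rightarrow> real" where
  "sigma_E k \<gamma> = (SUP \<theta>\<in>{0..<2*pi}. cmod (c_fun k \<gamma> \<theta> / a_fun k \<gamma> \<theta>))"

definition lambda_I :: "nat \<Rightarrow> real \<Rightarrow> real" where
  "lambda_I k \<gamma> = (INF \<theta>\<in>{0..<2*pi}. Re (b_fun k \<gamma> \<theta> / a_fun k \<gamma> \<theta>))"

definition I_IE :: "nat \<Rightarrow> real \<Rightarrow> real" where
  "I_IE k \<gamma> = lambda_I k \<gamma> / sigma_E k \<gamma>"

end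

theory Submission
  imports Defs
begin

(* With x = cos \<theta>, the multiple-angle formulas write a(\<theta>), b(\<theta>) and c(\<theta>) as P(x) + i sin \<theta> Q(x)
   with polynomials P, Q (Chebyshev expansions), so that |a|^2, |c|^2 and Re (b conj a) are polynomials
   in \<gamma> and x, because sin^2 \<theta> = 1 - x^2.  The three extremal claims -- |a| \<ge> 1 = a(0), while |c/a|
   is maximal and Re (b/a) minimal at \<theta> = pi, i.e. at x = -1 -- thus become nonnegativity statements
   for explicit polynomials on [11/5, \<infinity>) \<times> [-1, 1].  In the variable s = \<gamma> - 11/5 each of them is
   certified by an identity writing it as (1 \<plusminus> x) times a combination of products p^i q^j, where p, q
   are nonnegative affine functions of x and all coefficients are polynomials in s with nonnegative
   coefficients. *)

section \<open>Higher derivatives of p(z) ln z\<close>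

fun ln_deriv_rem :: "real poly \<Rightarrow> nat \<Rightarrow> real poly" where
  "ln_deriv_rem p 0 = 0"
| "ln_deriv_rem p (Suc j) =
     monom 1 j * (pderiv ^^ j) p + [:0, 1:] * pderiv (ln_deriv_rem p j)
     - smult (of_nat j) (ln_deriv_rem p j)"

lemma has_field_derivative_poly_mult_ln_plus_rat:
  fixes z :: real
  assumes "z > 0"
  shows "((\<lambda>z. poly p z * ln z + poly r z / z ^ j) has_field_derivative
           poly (pderiv p) z * ln z
         + poly (monom 1 j * p + [:0, 1:] * pderiv r - smult (of_nat j) r) z / z ^ Suc j) (at z)"
proof -
  have "((\<lambda>z. poly p z * ln z + poly r z / z ^ j) has_field_derivative
          (poly (pderiv p) z * ln z + poly p z / z)
        + (poly (pderiv r) z * z ^ j - poly r z * (real j * z ^ (j - 1))) / (z ^ j * z ^ j)) (at z)"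
    using assms by (intro derivative_eq_intros) auto
  then show ?thesis
    by (rule DERIV_cong) (use assms in \<open>cases j; simp add: field_simps poly_monom power_Suc\<close>)
qed

lemma higher_deriv_poly_mult_ln:
  fixes z :: real
  assumes "z > 0"
  shows "(deriv ^^ j) (\<lambda>z. poly p z * ln z) z
       = poly ((pderiv ^^ j) p) z * ln z + poly (ln_deriv_rem p j) z / z ^ j"
  using assms
proof (induction j arbitrary: z)
  case 0
  then show ?case by simp
next
  case (Suc j)
  have "((deriv ^^ j) (\<lambda>z. poly p z * ln z) has_field_derivative
          poly ((pderiv ^^ Suc j) p) z * ln z + poly (ln_deriv_rem p (Suc j)) z / z ^ Suc j) (at z)"
  proof (rule has_field_derivative_transform_within_open[where S = "{0<..}"])
    show "((\<lambda>z. poly ((pderiv ^^ j) p) z * ln z + poly (ln_deriv_rem p j) z / z ^ j)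
            has_field_derivative
            poly ((pderiv ^^ Suc j) p) z * ln z + poly (ln_deriv_rem p (Suc j)) z / z ^ Suc j) (at z)"
      using has_field_derivative_poly_mult_ln_plus_rat[OF Suc.prems] by simp
  qed (use Suc in auto)
  then show ?case by (simp add: DERIV_imp_deriv)
qed

lemma higher_deriv_poly_mult_ln_at_1:
  "(deriv ^^ j) (\<lambda>z. poly p z * ln z) 1 = poly (ln_deriv_rem p j) 1"
  using higher_deriv_poly_mult_ln[of 1 j p] by simp

section \<open>Chebyshev form of trigonometric polynomials\<close>

fun cheb_T :: "nat \<Rightarrow> real \<Rightarrow> real" where
  "cheb_T 0 x = 1"
| "cheb_T (Suc 0) x = x"
| "cheb_T (Suc (Suc n)) x = 2 * x * cheb_T (Suc n) x - cheb_T n x"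

(* cheb_U n is the Chebyshev polynomial U_(n-1) of the second kind. *)
fun cheb_U :: "nat \<Rightarrow> real \<Rightarrow> real" where
  "cheb_U 0 x = 0"
| "cheb_U (Suc 0) x = 1"
| "cheb_U (Suc (Suc n)) x = 2 * x * cheb_U (Suc n) x - cheb_U n x"

lemma cos_sin_mult_cheb:
  "cos (real n * t) = cheb_T n (cos t) \<and> sin (real n * t) = sin t * cheb_U n (cos t)"
proof (induction n rule: induct_nat_012)
  case (ge2 n)
  have shift: "real (Suc (Suc n)) * t = real (Suc n) * t + t" "real n * t = real (Suc n) * t - t"
    by (simp_all add: algebra_simps)
  have "cos (real (Suc (Suc n)) * t) = 2 * cos t * cos (real (Suc n) * t) - cos (real n * t)"
       "sin (real (Suc (Suc n)) * t) = 2 * cos t * sin (real (Suc n) * t) - sin (real n * t)"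
    unfolding shift cos_add cos_diff sin_add sin_diff by (simp_all add: algebra_simps)
  with ge2.IH show ?case by (simp add: algebra_simps)
qed simp_all

lemma sum_cis_eq_Complex_cheb:
  "(\<Sum>j\<in>A. of_real (w j) * cis (real j * t))
     = Complex (\<Sum>j\<in>A. w j * cheb_T j (cos t)) (sin t * (\<Sum>j\<in>A. w j * cheb_U j (cos t)))"
  using cos_sin_mult_cheb[of _ t]
  by (intro complex_eqI)
    (simp_all add: Re_sum Im_sum sum_distrib_left mult.commute[of t] mult.left_commute[of "sin t"])

lemma cmod_Complex_sin_mult_squared:
  "(cmod (Complex p (sin t * q)))\<^sup>2 = p\<^sup>2 + (1 - (cos t)\<^sup>2) * q\<^sup>2"
  by (simp add: cmod_power2 power_mult_distrib sin_squared_eq)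

lemma Re_Im_inner_Complex_sin_mult:
  "Re (Complex p (sin t * q)) * Re (Complex p' (sin t * q'))
     + Im (Complex p (sin t * q)) * Im (Complex p' (sin t * q'))
   = p * p' + (1 - (cos t)\<^sup>2) * q * q'"
  by (simp add: mult_ac flip: sin_squared_eq power2_eq_square)

lemma cheb_T_0_to_7:
  "cheb_T 0 x = 1" "cheb_T 1 x = x" "cheb_T 2 x = 2*x^2 - 1" "cheb_T 3 x = 4*x^3 - 3*x"
  "cheb_T 4 x = 8*x^4 - 8*x^2 + 1" "cheb_T 5 x = 16*x^5 - 20*x^3 + 5*x"
  "cheb_T 6 x = 32*x^6 - 48*x^4 + 18*x^2 - 1" "cheb_T 7 x = 64*x^7 - 112*x^5 + 56*x^3 - 7*x"
  by (simp_all add: eval_nat_numeral algebra_simps)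

lemma cheb_U_0_to_7:
  "cheb_U 0 x = 0" "cheb_U 1 x = 1" "cheb_U 2 x = 2*x" "cheb_U 3 x = 4*x^2 - 1"
  "cheb_U 4 x = 8*x^3 - 4*x" "cheb_U 5 x = 16*x^4 - 12*x^2 + 1"
  "cheb_U 6 x = 32*x^5 - 32*x^3 + 6*x" "cheb_U 7 x = 64*x^6 - 80*x^4 + 24*x^2 - 1"
  by (simp_all add: eval_nat_numeral algebra_simps)

lemma siems_f_eq_poly_B_mult_ln: "siems_f k \<gamma> = (\<lambda>z. poly (siems_B k \<gamma>) z * ln z)"
  by (auto simp: siems_f_def siems_B_def algebra_simps)

lemma siems_B_7:
  "siems_B 7 \<gamma> = [:0, (1-\<gamma>)^6, 6*\<gamma>*(1-\<gamma>)^5, 15*\<gamma>^2*(1-\<gamma>)^4, 20*\<gamma>^3*(1-\<gamma>)^3,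
     15*\<gamma>^4*(1-\<gamma>)^2, 6*\<gamma>^5*(1-\<gamma>), \<gamma>^6:]"
  unfolding siems_B_def by (simp add: numeral_eq_Suc algebra_simps)

lemma siems_f_7_higher_derivs_at_1:
  "(deriv ^^ 1) (siems_f 7 \<gamma>) 1 = 1"
  "(deriv ^^ 2) (siems_f 7 \<gamma>) 1 = 1 + 12*\<gamma>"
  "(deriv ^^ 3) (siems_f 7 \<gamma>) 1 = -1 + 18*\<gamma> + 90*\<gamma>^2"
  "(deriv ^^ 4) (siems_f 7 \<gamma>) 1 = 2 - 24*\<gamma> + 180*\<gamma>^2 + 480*\<gamma>^3"
  "(deriv ^^ 5) (siems_f 7 \<gamma>) 1 = -6 + 60*\<gamma> - 300*\<gamma>^2 + 1200*\<gamma>^3 + 1800*\<gamma>^4"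
  "(deriv ^^ 6) (siems_f 7 \<gamma>) 1 = 24 - 216*\<gamma> + 900*\<gamma>^2 - 2400*\<gamma>^3 + 5400*\<gamma>^4 + 4320*\<gamma>^5"
  "(deriv ^^ 7) (siems_f 7 \<gamma>) 1
     = -120 + 1008*\<gamma> - 3780*\<gamma>^2 + 8400*\<gamma>^3 - 12600*\<gamma>^4 + 15120*\<gamma>^5 + 5040*\<gamma>^6"
  unfolding siems_f_eq_poly_B_mult_ln higher_deriv_poly_mult_ln_at_1 siems_B_7
  by (simp add: numeral_eq_Suc monom_Suc pderiv_pCons, algebra)+

lemma sum_atLeastAtMost_1_7:
  "(\<Sum>j = (1::nat)..7. h j) = h 1 + h 2 + h 3 + h 4 + h 5 + h 6 + (h 7 :: 'a :: comm_monoid_add)"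
  by (simp add: numeral_eq_Suc atLeastAtMostSuc_conv ac_simps)

lemma sum_lessThan_7:
  "(\<Sum>j<(7::nat). h j) = h 0 + h 1 + h 2 + h 3 + h 4 + h 5 + (h 6 :: 'a :: comm_monoid_add)"
  by (simp add: eval_nat_numeral ac_simps)

lemma sum_atMost_7:
  "(\<Sum>j\<le>(7::nat). h j) = h 0 + h 1 + h 2 + h 3 + h 4 + h 5 + h 6 + (h 7 :: 'a :: comm_monoid_add)"
  by (simp add: eval_nat_numeral ac_simps)

lemma siems_A_7:
  "siems_A 7 \<gamma> = [:1/7 - \<gamma> + 3*\<gamma>^2 - 5*\<gamma>^3 + 5*\<gamma>^4 - 3*\<gamma>^5 + \<gamma>^6,
     223/140 - 77/10*\<gamma> + 53/4*\<gamma>^2 - 20/3*\<gamma>^3 - 15/2*\<gamma>^4 + 12*\<gamma>^5 - 6*\<gamma>^6,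
     -197/140 + 15*\<gamma> - 185/4*\<gamma>^2 + 175/3*\<gamma>^3 - 45/2*\<gamma>^4 - 15*\<gamma>^5 + 15*\<gamma>^6,
     153/140 - 10*\<gamma> + 45*\<gamma>^2 - 260/3*\<gamma>^3 + 65*\<gamma>^4 - 20*\<gamma>^6,
     -241/420 + 5*\<gamma> - 20*\<gamma>^2 + 155/3*\<gamma>^3 - 60*\<gamma>^4 + 15*\<gamma>^5 + 15*\<gamma>^6,
     37/210 - 3/2*\<gamma> + 23/4*\<gamma>^2 - 40/3*\<gamma>^3 + 45/2*\<gamma>^4 - 12*\<gamma>^5 - 6*\<gamma>^6,
     -1/42 + 1/5*\<gamma> - 3/4*\<gamma>^2 + 5/3*\<gamma>^3 - 5/2*\<gamma>^4 + 3*\<gamma>^5 + \<gamma>^6:]"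
  unfolding siems_A_def sum_atLeastAtMost_1_7 siems_f_7_higher_derivs_at_1
  by (simp add: numeral_eq_Suc fact_numeral) (simp add: field_simps)

lemma siems_a_7:
  "siems_a 7 \<gamma> 0 = -1/42 + 1/5*\<gamma> - 3/4*\<gamma>^2 + 5/3*\<gamma>^3 - 5/2*\<gamma>^4 + 3*\<gamma>^5 + \<gamma>^6"
  "siems_a 7 \<gamma> 1 = 37/210 - 3/2*\<gamma> + 23/4*\<gamma>^2 - 40/3*\<gamma>^3 + 45/2*\<gamma>^4 - 12*\<gamma>^5 - 6*\<gamma>^6"
  "siems_a 7 \<gamma> 2 = -241/420 + 5*\<gamma> - 20*\<gamma>^2 + 155/3*\<gamma>^3 - 60*\<gamma>^4 + 15*\<gamma>^5 + 15*\<gamma>^6"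
  "siems_a 7 \<gamma> 3 = 153/140 - 10*\<gamma> + 45*\<gamma>^2 - 260/3*\<gamma>^3 + 65*\<gamma>^4 - 20*\<gamma>^6"
  "siems_a 7 \<gamma> 4 = -197/140 + 15*\<gamma> - 185/4*\<gamma>^2 + 175/3*\<gamma>^3 - 45/2*\<gamma>^4 - 15*\<gamma>^5 + 15*\<gamma>^6"
  "siems_a 7 \<gamma> 5 = 223/140 - 77/10*\<gamma> + 53/4*\<gamma>^2 - 20/3*\<gamma>^3 - 15/2*\<gamma>^4 + 12*\<gamma>^5 - 6*\<gamma>^6"
  "siems_a 7 \<gamma> 6 = 1/7 - \<gamma> + 3*\<gamma>^2 - 5*\<gamma>^3 + 5*\<gamma>^4 - 3*\<gamma>^5 + \<gamma>^6"
  unfolding siems_a_def siems_A_7 by (simp_all add: numeral_eq_Suc)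

lemma siems_b_7:
  "siems_b 7 \<gamma> 0 = \<gamma>^6" "siems_b 7 \<gamma> 1 = 6*\<gamma>^5*(1-\<gamma>)" "siems_b 7 \<gamma> 2 = 15*\<gamma>^4*(1-\<gamma>)^2"
  "siems_b 7 \<gamma> 3 = 20*\<gamma>^3*(1-\<gamma>)^3" "siems_b 7 \<gamma> 4 = 15*\<gamma>^2*(1-\<gamma>)^4"
  "siems_b 7 \<gamma> 5 = 6*\<gamma>*(1-\<gamma>)^5" "siems_b 7 \<gamma> 6 = (1-\<gamma>)^6" "siems_b 7 \<gamma> 7 = 0"
  unfolding siems_b_def siems_B_7 by (simp_all add: numeral_eq_Suc)

lemma siems_C_7:
  "siems_C 7 \<gamma> = [:\<gamma>^6, 1 - 6*\<gamma> + 15*\<gamma>^2 - 20*\<gamma>^3 + 15*\<gamma>^4 - 6*\<gamma>^5 - 6*\<gamma>^6,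
     6*\<gamma> - 30*\<gamma>^2 + 60*\<gamma>^3 - 60*\<gamma>^4 + 30*\<gamma>^5 + 15*\<gamma>^6,
     15*\<gamma>^2 - 60*\<gamma>^3 + 90*\<gamma>^4 - 60*\<gamma>^5 - 20*\<gamma>^6,
     20*\<gamma>^3 - 60*\<gamma>^4 + 60*\<gamma>^5 + 15*\<gamma>^6, 15*\<gamma>^4 - 30*\<gamma>^5 - 6*\<gamma>^6, 6*\<gamma>^5 + \<gamma>^6:]"
  unfolding siems_C_def siems_B_7 by (simp add: numeral_eq_Suc) (simp add: algebra_simps)

lemma siems_c_7:
  "siems_c 7 \<gamma> 0 = 6*\<gamma>^5 + \<gamma>^6"
  "siems_c 7 \<gamma> 1 = 15*\<gamma>^4 - 30*\<gamma>^5 - 6*\<gamma>^6"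
  "siems_c 7 \<gamma> 2 = 20*\<gamma>^3 - 60*\<gamma>^4 + 60*\<gamma>^5 + 15*\<gamma>^6"
  "siems_c 7 \<gamma> 3 = 15*\<gamma>^2 - 60*\<gamma>^3 + 90*\<gamma>^4 - 60*\<gamma>^5 - 20*\<gamma>^6"
  "siems_c 7 \<gamma> 4 = 6*\<gamma> - 30*\<gamma>^2 + 60*\<gamma>^3 - 60*\<gamma>^4 + 30*\<gamma>^5 + 15*\<gamma>^6"
  "siems_c 7 \<gamma> 5 = 1 - 6*\<gamma> + 15*\<gamma>^2 - 20*\<gamma>^3 + 15*\<gamma>^4 - 6*\<gamma>^5 - 6*\<gamma>^6"
  "siems_c 7 \<gamma> 6 = \<gamma>^6"
  unfolding siems_c_def siems_C_7 by (simp_all add: numeral_eq_Suc)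

section \<open>a, b and c as polynomials in s = \<gamma> - 11/5 and x = cos \<theta>\<close>

(* 656250 a(\<theta>) = a7_re s x + i sin \<theta> a7_im s x with s = \<gamma> - 11/5 and x = cos \<theta>, and likewise
   for 15625 b(\<theta>) and 15625 c(\<theta>); the factors clear all denominators. *)
definition a7_re :: "real \<Rightarrow> real \<Rightarrow> real" where
  "a7_re s x =
    -337109290 - 958461000 * s - 1067272500 * s^2 - 580300000 * s^3 - 153562500 * s^4
    - 15750000 * s^5 + 1460156443 * x + 4534329240 * x * s + 5768999250 * x * s^2
    + 3805970000 * x * s^3 + 1352137500 * x * s^4 + 239400000 * x * s^5 + 15750000 * x * s^6
    - 1929032929 * x^2 - 6333732720 * x^2 * s - 8747529000 * x^2 * s^2 - 6444410000 * x^2 * s^3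
    - 2638912500 * x^2 * s^4 - 560700000 * x^2 * s^5 - 47250000 * x^2 * s^6 - 451948670 * x^3
    - 1074204600 * x^3 * s - 712976250 * x^3 * s^2 + 194950000 * x^3 * s^3
    + 442312500 * x^3 * s^4 + 189000000 * x^3 * s^5 + 26250000 * x^3 * s^6 + 3248296504 * x^4
    + 10075617720 * x^4 * s + 12999241500 * x^4 * s^2 + 8862910000 * x^4 * s^3
    + 3327975000 * x^4 * s^4 + 639450000 * x^4 * s^5 + 47250000 * x^4 * s^6 - 2727263632 * x^5
    - 8561820960 * x^5 * s - 11330487000 * x^5 * s^2 - 8081080000 * x^5 * s^3
    - 3266550000 * x^5 * s^4 - 705600000 * x^5 * s^5 - 63000000 * x^5 * s^6 + 737557824 * x^6
    + 2318272320 * x^6 * s + 3090024000 * x^6 * s^2 + 2241960000 * x^6 * s^3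
    + 936600000 * x^6 * s^4 + 214200000 * x^6 * s^5 + 21000000 * x^6 * s^6"

definition a7_im :: "real \<Rightarrow> real \<Rightarrow> real" where
  "a7_im s x =
    211458246 + 786544080 * s + 1163578500 * s^2 + 873040000 * s^3 + 348337500 * s^4
    + 69300000 * s^5 + 5250000 * s^6 - 28300493 * x - 426571740 * x * s - 1089149250 * x * s^2
    - 1172220000 * x * s^3 - 623700000 * x * s^4 - 160650000 * x * s^5 - 15750000 * x * s^6
    - 1815580486 * x^2 - 5355115080 * x^2 * s - 6378219750 * x^2 * s^2 - 3845590000 * x^2 * s^3
    - 1190962500 * x^2 * s^4 - 163800000 * x^2 * s^5 - 5250000 * x^2 * s^6 + 3617075416 * x^3
    + 11234753880 * x^3 * s + 14544253500 * x^3 * s^2 + 9983890000 * x^3 * s^3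
    + 3796275000 * x^3 * s^4 + 746550000 * x^3 * s^5 + 57750000 * x^3 * s^6 - 2727263632 * x^4
    - 8561820960 * x^4 * s - 11330487000 * x^4 * s^2 - 8081080000 * x^4 * s^3
    - 3266550000 * x^4 * s^4 - 705600000 * x^4 * s^5 - 63000000 * x^4 * s^6 + 737557824 * x^5
    + 2318272320 * x^5 * s + 3090024000 * x^5 * s^2 + 2241960000 * x^5 * s^3
    + 936600000 * x^5 * s^4 + 214200000 * x^5 * s^5 + 21000000 * x^5 * s^6"

definition b7_re :: "real \<Rightarrow> real \<Rightarrow> real" where
  "b7_re s x =
    -3828995 - 12974250 * s - 16830000 * s^2 - 10525000 * s^3 - 3187500 * s^4 - 375000 * s^5
    + 8885844 * x + 36779970 * x * s + 59795250 * x * s^2 + 48960000 * x * s^3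
    + 21225000 * x * s^4 + 4575000 * x * s^5 + 375000 * x * s^6 - 2165832 * x^2
    - 20531160 * x^2 * s - 52073250 * x^2 * s^2 - 59505000 * x^2 * s^3 - 34612500 * x^2 * s^4
    - 9975000 * x^2 * s^5 - 1125000 * x^2 * s^6 - 12735360 * x^3 - 41428800 * x^3 * s
    - 49860000 * x^3 * s^2 - 24650000 * x^3 * s^3 - 1500000 * x^3 * s^4 + 2625000 * x^3 * s^5
    + 625000 * x^3 * s^6 + 16578432 * x^4 + 68636160 * x^4 * s + 115992000 * x^4 * s^2
    + 101880000 * x^4 * s^3 + 48675000 * x^4 * s^4 + 11850000 * x^4 * s^5 + 1125000 * x^4 * s^6
    - 8211456 * x^5 - 37946880 * x^5 * s - 72576000 * x^5 * s^2 - 73440000 * x^5 * s^3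
    - 41400000 * x^5 * s^4 - 12300000 * x^5 * s^5 - 1500000 * x^5 * s^6 + 1492992 * x^6
    + 7464960 * x^6 * s + 15552000 * x^6 * s^2 + 17280000 * x^6 * s^3 + 10800000 * x^6 * s^4
    + 3600000 * x^6 * s^5 + 500000 * x^6 * s^6"

definition b7_im :: "real \<Rightarrow> real \<Rightarrow> real" where
  "b7_im s x =
    -561132 + 1835490 * s + 7649250 * s^2 + 9095000 * s^3 + 4950000 * s^4 + 1275000 * s^5
    + 125000 * s^6 + 6683256 * x + 16586280 * x * s + 11754750 * x * s^2 - 2085000 * x * s^3
    - 6225000 * x * s^4 - 2700000 * x * s^5 - 375000 * x * s^6 - 16841088 * x^2
    - 60402240 * x^2 * s - 86148000 * x^2 * s^2 - 61370000 * x^2 * s^3 - 22200000 * x^2 * s^4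
    - 3525000 * x^2 * s^5 - 125000 * x^2 * s^6 + 17324928 * x^3 + 72368640 * x^3 * s
    + 123768000 * x^3 * s^2 + 110520000 * x^3 * s^3 + 54075000 * x^3 * s^4
    + 13650000 * x^3 * s^5 + 1375000 * x^3 * s^6 - 8211456 * x^4 - 37946880 * x^4 * s
    - 72576000 * x^4 * s^2 - 73440000 * x^4 * s^3 - 41400000 * x^4 * s^4 - 12300000 * x^4 * s^5
    - 1500000 * x^4 * s^6 + 1492992 * x^5 + 7464960 * x^5 * s + 15552000 * x^5 * s^2
    + 17280000 * x^5 * s^3 + 10800000 * x^5 * s^4 + 3600000 * x^5 * s^5 + 500000 * x^5 * s^6"

definition c7_re :: "real \<Rightarrow> real \<Rightarrow> real" where
  "c7_re s x =
    -14733620 - 36816750 * s - 36273750 * s^2 - 17525000 * s^3 - 4125000 * s^4 - 375000 * s^5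
    + 87889189 * x + 235525470 * x * s + 258462750 * x * s^2 + 147110000 * x * s^3
    + 45037500 * x * s^4 + 6825000 * x * s^5 + 375000 * x * s^6 - 149118992 * x^2
    - 411980160 * x^2 * s - 473232000 * x^2 * s^2 - 287705000 * x^2 * s^3 - 96675000 * x^2 * s^4
    - 16725000 * x^2 * s^5 - 1125000 * x^2 * s^6 + 8475840 * x^3 + 35251200 * x^3 * s
    + 59940000 * x^3 * s^2 + 53100000 * x^3 * s^3 + 25687500 * x^3 * s^4 + 6375000 * x^3 * s^5
    + 625000 * x^3 * s^6 + 208481592 * x^4 + 560810160 * x^4 * s + 622557000 * x^4 * s^2
    + 362580000 * x^4 * s^3 + 115425000 * x^4 * s^4 + 18600000 * x^4 * s^5 + 1125000 * x^4 * s^6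
    - 197668336 * x^5 - 537398880 * x^5 * s - 607146000 * x^5 * s^2 - 364040000 * x^5 * s^3
    - 121650000 * x^5 * s^4 - 21300000 * x^5 * s^5 - 1500000 * x^5 * s^6 + 56689952 * x^6
    + 154608960 * x^6 * s + 175692000 * x^6 * s^2 + 106480000 * x^6 * s^3 + 36300000 * x^6 * s^4
    + 6600000 * x^6 * s^5 + 500000 * x^6 * s^6"

definition c7_im :: "real \<Rightarrow> real \<Rightarrow> real" where
  "c7_im s x =
    18001483 + 51626490 * s + 60753000 * s^2 + 37145000 * s^3 + 12262500 * s^4 + 2025000 * s^5
    + 125000 * s^6 - 23619464 * x - 73596720 * x * s - 96069000 * x * s^2 - 66485000 * x * s^3
    - 25350000 * x * s^4 - 4950000 * x * s^5 - 375000 * x * s^6 - 90358328 * x^2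
    - 233448240 * x^2 * s - 243633000 * x^2 * s^2 - 128920000 * x^2 * s^3 - 35137500 * x^2 * s^4
    - 4275000 * x^2 * s^5 - 125000 * x^2 * s^6 + 236826568 * x^3 + 638114640 * x^3 * s
    + 710403000 * x^3 * s^2 + 415820000 * x^3 * s^3 + 133575000 * x^3 * s^4
    + 21900000 * x^3 * s^5 + 1375000 * x^3 * s^6 - 197668336 * x^4 - 537398880 * x^4 * s
    - 607146000 * x^4 * s^2 - 364040000 * x^4 * s^3 - 121650000 * x^4 * s^4
    - 21300000 * x^4 * s^5 - 1500000 * x^4 * s^6 + 56689952 * x^5 + 154608960 * x^5 * s
    + 175692000 * x^5 * s^2 + 106480000 * x^5 * s^3 + 36300000 * x^5 * s^4 + 6600000 * x^5 * s^5
    + 500000 * x^5 * s^6"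

lemma a7_re_im_cheb:
  "656250 * (\<Sum>j<7. siems_a 7 (s + 11/5) j * cheb_T j x) = a7_re s x"
  "656250 * (\<Sum>j<7. siems_a 7 (s + 11/5) j * cheb_U j x) = a7_im s x"
  unfolding sum_lessThan_7 siems_a_7 cheb_T_0_to_7 cheb_U_0_to_7 a7_re_def a7_im_def by algebra+

lemma b7_re_im_cheb:
  "15625 * (\<Sum>j\<le>7. siems_b 7 (s + 11/5) j * cheb_T j x) = b7_re s x"
  "15625 * (\<Sum>j\<le>7. siems_b 7 (s + 11/5) j * cheb_U j x) = b7_im s x"
  unfolding sum_atMost_7 siems_b_7 cheb_T_0_to_7 cheb_U_0_to_7 b7_re_def b7_im_def by algebra+

lemma c7_re_im_cheb:
  "15625 * (\<Sum>j<7. siems_c 7 (s + 11/5) j * cheb_T j x) = c7_re s x"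
  "15625 * (\<Sum>j<7. siems_c 7 (s + 11/5) j * cheb_U j x) = c7_im s x"
  unfolding sum_lessThan_7 siems_c_7 cheb_T_0_to_7 cheb_U_0_to_7 c7_re_def c7_im_def by algebra+

lemma a_fun_7_eq:
  "a_fun 7 \<gamma> t = Complex (a7_re (\<gamma> - 11/5) (cos t) / 656250) (sin t * (a7_im (\<gamma> - 11/5) (cos t) / 656250))"
  using a7_re_im_cheb[of "\<gamma> - 11/5" "cos t"]
  by (simp add: a_fun_def sum_cis_eq_Complex_cheb)

lemma b_fun_7_eq:
  "b_fun 7 \<gamma> t = Complex (b7_re (\<gamma> - 11/5) (cos t) / 15625) (sin t * (b7_im (\<gamma> - 11/5) (cos t) / 15625))"
  using b7_re_im_cheb[of "\<gamma> - 11/5" "cos t"]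
  by (simp add: b_fun_def sum_cis_eq_Complex_cheb)

lemma c_fun_7_eq:
  "c_fun 7 \<gamma> t = Complex (c7_re (\<gamma> - 11/5) (cos t) / 15625) (sin t * (c7_im (\<gamma> - 11/5) (cos t) / 15625))"
  using c7_re_im_cheb[of "\<gamma> - 11/5" "cos t"]
  by (simp add: c_fun_def sum_cis_eq_Complex_cheb)

lemma a7_re_at_1: "a7_re s 1 = 656250"
  by (simp add: a7_re_def)

lemma a7_re_at_minus_1:
  "a7_re s (-1) = 3438767968 + 10203392640 * s + 12548928000 * s^2 + 8160320000 * s^3 + 2944200000 * s^4
    + 554400000 * s^5 + 42000000 * s^6"
  by (simp add: a7_re_def)

lemma c7_re_at_minus_1:
  "c7_re s (-1) = 202622239 + 533244420 * s + 577486500 * s^2 + 327660000 * s^3 + 101850000 * s^4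
    + 16200000 * s^5 + 1000000 * s^6"
  by (simp add: c7_re_def)

lemma a7_re_at_minus_1_pos: "0 \<le> s \<Longrightarrow> 0 < a7_re s (-1)"
  unfolding a7_re_at_minus_1 by (intro add_pos_nonneg mult_nonneg_nonneg zero_le_power; simp)

lemma c7_re_at_minus_1_pos: "0 \<le> s \<Longrightarrow> 0 < c7_re s (-1)"
  unfolding c7_re_at_minus_1 by (intro add_pos_nonneg mult_nonneg_nonneg zero_le_power; simp)

section \<open>Positivity certificates\<close>

(* Stored in expanded form, so that the certificate identities below do not have to square
   a7_re and a7_im again. *)
definition norm2_a7 :: "real \<Rightarrow> real \<Rightarrow> real" where
  "norm2_a7 s x =
    158357263205700616 + 978854677522347360 * s + 2748970565113718400 * s^2
    + 4636761752975240000 * s^3 + 5229596602948200000 * s^4 + 4152637597869600000 * s^5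
    + 2378795892221000000 * s^6 + 989599556190000000 * s^7 + 296420823562500000 * s^8
    + 62283716250000000 * s^9 + 8708096250000000 * s^10 + 727650000000000 * s^11
    + 27562500000000 * s^12 - 996433348798741496 * x - 6081058424801324160 * x * s
    - 16895805416426210400 * x * s^2 - 28249357940033440000 * x * s^3
    - 31639509767044200000 * x * s^4 - 24991328243922600000 * x * s^5
    - 14263390775326000000 * x * s^6 - 5920879854015000000 * x * s^7
    - 1772212439812500000 * x * s^8 - 372572235000000000 * x * s^9
    - 52165890000000000 * x * s^10 - 4365900000000000 * x * s^11 - 165375000000000 * x * s^12
    + 2620894078217904490 * x^2 + 15780453317864285400 * x^2 * s
    + 43350249230156526000 * x^2 * s^2 + 71807159166582350000 * x^2 * s^3
    + 79828513988419875000 * x^2 * s^4 + 62699691682194000000 * x^2 * s^5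
    + 35644029808940000000 * x^2 * s^6 + 14761852958475000000 * x^2 * s^7
    + 4414853205000000000 * x^2 * s^8 + 928605431250000000 * x^2 * s^9
    + 130208006250000000 * x^2 * s^10 + 10914750000000000 * x^2 * s^11
    + 413437500000000 * x^2 * s^12 - 3684214292431184070 * x^3 - 21881303007840847200 * x^3 * s
    - 59412736135747743000 * x^3 * s^2 - 97463140890343550000 * x^3 * s^3
    - 107507847269935875000 * x^3 * s^4 - 83937533403192000000 * x^3 * s^5
    - 47518060420670000000 * x^3 * s^6 - 19630604417550000000 * x^3 * s^7
    - 5865704893125000000 * x^3 * s^8 - 1234373700000000000 * x^3 * s^9
    - 173335050000000000 * x^3 * s^10 - 14553000000000000 * x^3 * s^11
    - 551250000000000 * x^3 * s^12 + 2916510370345062240 * x^4 + 17089507862374235400 * x^4 * s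
    + 45860670558001026000 * x^4 * s^2 + 74488796488179850000 * x^4 * s^3
    + 81503632345351125000 * x^4 * s^4 + 63238168587594000000 * x^4 * s^5
    + 35641971778315000000 * x^4 * s^6 + 14685500699100000000 * x^4 * s^7
    + 4383807494062500000 * x^4 * s^8 + 922955118750000000 * x^4 * s^9
    + 129794568750000000 * x^4 * s^10 + 10914750000000000 * x^4 * s^11
    + 413437500000000 * x^4 * s^12 - 1231914712309467696 * x^5 - 7124738342716784160 * x^5 * s
    - 18898920769967435400 * x^5 * s^2 - 30390587789342690000 * x^5 * s^3
    - 32977809617042325000 * x^5 * s^4 - 25421688061992600000 * x^5 * s^5
    - 14261703007076000000 * x^5 * s^6 - 5859798046515000000 * x^5 * s^7
    - 1747375871062500000 * x^5 * s^8 - 368051985000000000 * x^5 * s^9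
    - 51835140000000000 * x^5 * s^10 - 4365900000000000 * x^5 * s^11
    - 165375000000000 * x^5 * s^12 + 216801072434788416 * x^6 + 1238283917598087360 * x^6 * s
    + 3247571968870118400 * x^6 * s^2 + 5170369211982240000 * x^6 * s^3
    + 5563423717303200000 * x^6 * s^4 + 4260051841449600000 * x^6 * s^5
    + 2378356723596000000 * x^6 * s^6 + 974329104315000000 * x^6 * s^7
    + 290211681375000000 * x^6 * s^8 + 61153653750000000 * x^6 * s^9
    + 8625408750000000 * x^6 * s^10 + 727650000000000 * x^6 * s^11 + 27562500000000 * x^6 * s^12"

definition norm2_c7 :: "real \<Rightarrow> real \<Rightarrow> real" where
  "norm2_c7 s x =
    541132948503689 + 2943594772439340 * s + 7276943040630600 * s^2 + 10797635017635000 * s^3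
    + 10695509713237500 * s^4 + 7438569383400000 * s^5 + 3717302630250000 * s^6
    + 1341723960000000 * s^7 + 346153781250000 * s^8 + 62043125000000 * s^9
    + 7306875000000 * s^10 + 506250000000 * s^11 + 15625000000 * s^12 - 3440222584998584 * x
    - 18500354400708540 * x * s - 45262645711196100 * x * s^2 - 66543943458810000 * x * s^3
    - 65387612055675000 * x * s^4 - 45169555332900000 * x * s^5 - 22450139094000000 * x * s^6
    - 8070267510000000 * x * s^7 - 2076603937500000 * x * s^8 - 371774375000000 * x * s^9
    - 43794375000000 * x * s^10 - 3037500000000 * x * s^11 - 93750000000 * x * s^12
    + 9099292547546960 * x^2 + 48403684353327600 * x^2 * s + 117250277122771500 * x^2 * s^2
    + 170841961173275000 * x^2 * s^3 + 166558284657937500 * x^2 * s^4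
    + 114290460913500000 * x^2 * s^5 + 56496658360000000 * x^2 * s^6
    + 20226321900000000 * x^2 * s^7 + 5190771562500000 * x^2 * s^8 + 928225000000000 * x^2 * s^9
    + 109368750000000 * x^2 * s^10 + 7593750000000 * x^2 * s^11 + 234375000000 * x^2 * s^12
    - 12816393968713280 * x^3 - 67479160420636800 * x^3 * s - 161908103051112000 * x^3 * s^2
    - 233877072957700000 * x^3 * s^3 - 226265489683500000 * x^3 * s^4
    - 154237279555500000 * x^3 * s^5 - 75831256042500000 * x^3 * s^6
    - 27037091700000000 * x^3 * s^7 - 6920122500000000 * x^3 * s^8
    - 1236018750000000 * x^3 * s^9 - 145668750000000 * x^3 * s^10 - 10125000000000 * x^3 * s^11
    - 312500000000 * x^3 * s^12 + 10138802671022960 * x^4 + 52865310335877600 * x^4 * s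
    + 125695219247334000 * x^4 * s^2 + 180054460766400000 * x^4 * s^3
    + 172890250609500000 * x^4 * s^4 + 117086085763500000 * x^4 * s^5
    + 57255669453750000 * x^4 * s^6 + 20330159400000000 * x^4 * s^7
    + 5189470781250000 * x^4 * s^8 + 925803125000000 * x^4 * s^9 + 109134375000000 * x^4 * s^10
    + 7593750000000 * x^4 * s^11 + 234375000000 * x^4 * s^12 - 4271269192904384 * x^5
    - 22067663493311040 * x^5 * s - 52015664590533600 * x^5 * s^2
    - 73911640164560000 * x^5 * s^3 - 70452168801300000 * x^5 * s^4
    - 47405816150400000 * x^5 * s^5 - 23057324531500000 * x^5 * s^6
    - 8153337510000000 * x^5 * s^7 - 2075563312500000 * x^5 * s^8 - 369836875000000 * x^5 * s^9
    - 43606875000000 * x^5 * s^10 - 3037500000000 * x^5 * s^11 - 93750000000 * x^5 * s^12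
    + 748657823683264 * x^6 + 3834588853011840 * x^6 * s + 8963973942105600 * x^6 * s^2
    + 12638599623760000 * x^6 * s^3 + 11961225559800000 * x^6 * s^4
    + 7997534978400000 * x^6 * s^5 + 3869089224000000 * x^6 * s^6 + 1362491460000000 * x^6 * s^7
    + 345893625000000 * x^6 * s^8 + 61558750000000 * x^6 * s^9 + 7260000000000 * x^6 * s^10
    + 506250000000 * x^6 * s^11 + 15625000000 * x^6 * s^12"

definition inner_ba7 :: "real \<Rightarrow> real \<Rightarrow> real" where
  "inner_ba7 s x =
    1172133797369078 + 7990457025729480 * s + 24603712696840200 * s^2 + 45333531009870000 * s^3
    + 55749313819537500 * s^4 + 48258001108050000 * s^5 + 30175875274875000 * s^6
    + 13742538757500000 * s^7 + 4526147718750000 * s^8 + 1051833125000000 * s^9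
    + 163793437500000 * s^10 + 15356250000000 * s^11 + 656250000000 * s^12
    - 7157322377788493 * x - 48270564317809380 * x * s - 147467058460741200 * x * s^2
    - 270252150112095000 * x * s^3 - 331257160908787500 * x * s^4 - 286324761982050000 * x * s^5
    - 179051334524250000 * x * s^6 - 81649534732500000 * x * s^7 - 26951873812500000 * x * s^8
    - 6280811250000000 * x * s^9 - 980791875000000 * x * s^10 - 92137500000000 * x * s^11
    - 3937500000000 * x * s^12 + 18478211824756295 * x^2 + 122659123442167200 * x^2 * s
    + 370469906854540500 * x^2 * s^2 + 673643936137425000 * x^2 * s^3
    + 821690978852437500 * x^2 * s^4 + 708488504539500000 * x^2 * s^5
    + 442826205607500000 * x^2 * s^6 + 202143553237500000 * x^2 * s^7
    + 66869614218750000 * x^2 * s^8 + 15626559375000000 * x^2 * s^9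
    + 2447057812500000 * x^2 * s^10 + 230343750000000 * x^2 * s^11 + 9843750000000 * x^2 * s^12
    - 25732467724459310 * x^3 - 167577130494227100 * x^3 * s - 499057925731929000 * x^3 * s^2
    - 898555985891775000 * x^3 * s^3 - 1089106333689187500 * x^3 * s^4
    - 935849686123500000 * x^3 * s^5 - 584307342060000000 * x^3 * s^6
    - 266929640775000000 * x^3 * s^7 - 88482673125000000 * x^3 * s^8
    - 20734787500000000 * x^3 * s^9 - 3256181250000000 * x^3 * s^10
    - 307125000000000 * x^3 * s^11 - 13125000000000 * x^3 * s^12 + 20325351979688920 * x^4
    + 129638505379642200 * x^4 * s + 379980185496790500 * x^4 * s^2
    + 676327060417425000 * x^4 * s^3 + 813505644982125000 * x^4 * s^4
    + 695995634333250000 * x^4 * s^5 + 433840008654375000 * x^4 * s^6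
    + 198284868862500000 * x^4 * s^7 + 65856856406250000 * x^4 * s^8
    + 15475621875000000 * x^4 * s^9 + 2437214062500000 * x^4 * s^10
    + 230343750000000 * x^4 * s^11 + 9843750000000 * x^4 * s^12 - 8611954322093968 * x^5
    - 53771615251226880 * x^5 * s - 154953082046416200 * x^5 * s^2
    - 272302343207970000 * x^5 * s^3 - 324666282679725000 * x^5 * s^4
    - 276320425192050000 * x^5 * s^5 - 171861392586750000 * x^5 * s^6
    - 78562587232500000 * x^5 * s^7 - 26141667562500000 * x^5 * s^8
    - 6160061250000000 * x^5 * s^9 - 972916875000000 * x^5 * s^10 - 92137500000000 * x^5 * s^11
    - 3937500000000 * x^5 * s^12 + 1526057076433728 * x^6 + 9331224215724480 * x^6 * s
    + 26424261190915200 * x^6 * s^2 + 45805951647120000 * x^6 * s^3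
    + 54083839623600000 * x^6 * s^4 + 45752733316800000 * x^6 * s^5
    + 28377979634250000 * x^6 * s^6 + 12970801882500000 * x^6 * s^7
    + 4323596156250000 * x^6 * s^8 + 1021645625000000 * x^6 * s^9 + 161824687500000 * x^6 * s^10
    + 15356250000000 * x^6 * s^11 + 656250000000 * x^6 * s^12"

lemma norm2_a7_eq: "norm2_a7 s x = (a7_re s x)\<^sup>2 + (1 - x\<^sup>2) * (a7_im s x)\<^sup>2"
  unfolding norm2_a7_def a7_re_def a7_im_def by algebra

lemma norm2_c7_eq: "norm2_c7 s x = (c7_re s x)\<^sup>2 + (1 - x\<^sup>2) * (c7_im s x)\<^sup>2"
  unfolding norm2_c7_def c7_re_def c7_im_def by algebra

lemma inner_ba7_eq: "inner_ba7 s x = b7_re s x * a7_re s x + (1 - x\<^sup>2) * b7_im s x * a7_im s x"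
  unfolding inner_ba7_def a7_re_def a7_im_def b7_re_def b7_im_def by algebra

(* The certificates were found by computer algebra. *)
definition norm2_a7_cert_left :: "real \<Rightarrow> real \<Rightarrow> real \<Rightarrow> real" where
  "norm2_a7_cert_left s p q =
    (5912562353539393262 + 35087099775358955520 * s + 95207462322141388800 * s^2
     + 156103086619719680000 * s^3 + 172125166654022400000 * s^4 + 134350549709107200000 * s^5
     + 76043154203072000000 * s^6 + 31411282318080000000 * s^7 + 9385293204000000000 * s^8
     + 1974997920000000000 * s^9 + 277336080000000000 * s^10 + 23284800000000000 * s^11
     + 882000000000000 * s^12) * q^5
    + (14310450014434452630 + 85630398388113343800 * s + 234012427682255397000 * s^2
     + 385975256850680700000 * s^3 + 427636316935059750000 * s^4 + 335015654636628000000 * s^5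
     + 190111261044180000000 * s^6 + 78650369410200000000 * s^7 + 23512906147500000000 * s^8
     + 4946535300000000000 * s^9 + 694001700000000000 * s^10 + 58212000000000000 * s^11
     + 2205000000000000 * s^12) * p * q^4
    + (13861876839311787730 + 83639571407908798800 * s + 230190279652447947000 * s^2
     + 381895461501493450000 * s^3 + 425100493932641625000 * s^4 + 334218055330488000000 * s^5
     + 190132458493180000000 * s^6 + 78775427087700000000 * s^7 + 23562786003750000000 * s^8
     + 4955575800000000000 * s^9 + 694663200000000000 * s^10 + 58212000000000000 * s^11
     + 2205000000000000 * s^12) * p^2 * q^3
    + (6718691952405595790 + 40875611334924689400 * s + 113280459435231186000 * s^2
     + 189012565257509350000 * s^3 + 211354219510189875000 * s^4 + 166742139599049000000 * s^5
     + 95085773380465000000 * s^6 + 39451689413850000000 * s^7 + 11806436289375000000 * s^8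
     + 2482308150000000000 * s^9 + 347662350000000000 * s^10 + 29106000000000000 * s^11
     + 1102500000000000 * s^12) * p^3 * q^2
    + (1629860678965293960 + 9996477134890713600 * s + 27891687676881084000 * s^2
     + 46796404951934400000 * s^3 + 52557896178837000000 * s^4 + 41601878635401000000 * s^5
     + 23778574344210000000 * s^6 + 9879278078775000000 * s^7 + 2957895734062500000 * s^8
     + 621707100000000000 * s^9 + 86998275000000000 * s^10 + 7276500000000000 * s^11
     + 275625000000000 * s^12) * p^4 * q
    + (158356832541638116 + 978854677522347360 * s + 2748970565113718400 * s^2
     + 4636761752975240000 * s^3 + 5229596602948200000 * s^4 + 4152637597869600000 * s^5
     + 2378795892221000000 * s^6 + 989599556190000000 * s^7 + 296420823562500000 * s^8
     + 62283716250000000 * s^9 + 8708096250000000 * s^10 + 727650000000000 * s^11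
     + 27562500000000 * s^12) * p^5"

definition norm2_a7_cert_right :: "real \<Rightarrow> real \<Rightarrow> real \<Rightarrow> real" where
  "norm2_a7_cert_right s p q =
    (158356832541638116 + 978854677522347360 * s + 2748970565113718400 * s^2
     + 4636761752975240000 * s^3 + 5229596602948200000 * s^4 + 4152637597869600000 * s^5
     + 2378795892221000000 * s^6 + 989599556190000000 * s^7 + 296420823562500000 * s^8
     + 62283716250000000 * s^9 + 8708096250000000 * s^10 + 727650000000000 * s^11
     + 27562500000000 * s^12) * q^9
    + (587134976617639664 + 3707488350422149440 * s + 10593900234710973600 * s^2
     + 18118259589718960000 * s^3 + 20656456262437800000 * s^4 + 16535047734773400000 * s^5
     + 9524568146884000000 * s^6 + 3975115707885000000 * s^7 + 1191995795812500000 * s^8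
     + 250264927500000000 * s^9 + 34915072500000000 * s^10 + 2910600000000000 * s^11
     + 110250000000000 * s^12) * p * q^8
    + (779051403402946246 + 5099387983157999160 * s + 14991675912437960400 * s^2
     + 26217216590167190000 * s^3 + 30404773217691075000 * s^4 + 24646429391022600000 * s^5
     + 14319327980951000000 * s^6 + 6005914300890000000 * s^7 + 1803878307000000000 * s^8
     + 378222547500000000 * s^9 + 52579327500000000 * s^10 + 4365900000000000 * s^11
     + 165375000000000 * s^12) * p^2 * q^7
    + (414157681553931914 + 2906781544907449440 * s + 9016730527807098600 * s^2
     + 16428656958140210000 * s^3 + 19649505377615925000 * s^4 + 16288695017498400000 * s^5
     + 9607617205634000000 * s^6 + 4064491248510000000 * s^7 + 1223971741125000000 * s^8
     + 255915240000000000 * s^9 + 35328510000000000 * s^10 + 2910600000000000 * s^11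
     + 110250000000000 * s^12) * p^3 * q^6
    + (66578048077818166 + 523654304070012360 * s + 1814659746228743400 * s^2
     + 3621168082072240000 * s^3 + 4643559318965700000 * s^4 + 4049124929799600000 * s^5
     + 2470695722971000000 * s^6 + 1065151676190000000 * s^7 + 322290986062500000 * s^8
     + 66803966250000000 * s^9 + 9038846250000000 * s^10 + 727650000000000 * s^11
     + 27562500000000 * s^12) * p^4 * q^5
    + (24035600760068450 + 68348677935510000 * s + 80700555056100000 * s^2
     + 62007076680500000 * s^3 + 56088433301250000 * s^4 + 59172128295000000 * s^5
     + 45855278000000000 * s^6 + 22505608125000000 * s^7 + 6725939062500000 * s^8
     + 1130062500000000 * s^9 + 82687500000000 * s^10) * p^5 * q^4
    + (24301191327831250 + 89457870424125000 * s + 147044053012500000 * s^2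
     + 141455767293750000 * s^3 + 87241525546875000 * s^4 + 35425805625000000 * s^5
     + 9289940625000000 * s^6 + 1447031250000000 * s^7 + 103359375000000 * s^8) * p^6 * q^3
    + (3251324559218750 + 9343636050000000 * s + 11496307265625000 * s^2 + 7854278906250000 * s^3
     + 3146431640625000 * s^4 + 702843750000000 * s^5 + 68906250000000 * s^6) * p^7 * q^2
    + (305823355468750 + 624945234375000 * s + 482516015625000 * s^2 + 175710937500000 * s^3
     + 25839843750000 * s^4) * p^8 * q
    + (13715214843750 + 17571093750000 * s + 5167968750000 * s^2) * p^9"

definition norm2_ca7_cert :: "real \<Rightarrow> real \<Rightarrow> real \<Rightarrow> real" where
  "norm2_ca7_cert s p q =
    (318980055928947506987681265453625 + 13534883616368542865216212154790000 * s
     + 117188928338721956083068402623250000 * s^2 + 523317552875545613080220706305000000 * s^3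
     + 1509395226601752231820891846612500000 * s^4 + 3111767984449228070535927254100000000 * s^5
     + 4851271977344788868400647073000000000 * s^6 + 5921848532402172580562341425000000000 * s^7
     + 5789274822947510266550814187500000000 * s^8 + 4600382355930065015186670000000000000 * s^9
     + 2999345551457327598031545000000000000 * s^10
     + 1612633021744708837431600000000000000 * s^11
     + 716060138187224245655625000000000000 * s^12 + 262049666517510088350000000000000000 * s^13
     + 78585731809202619750000000000000000 * s^14 + 19117584012221061500000000000000000 * s^15
     + 3713362180724070000000000000000000 * s^16 + 562176255616500000000000000000000 * s^17
     + 63901888697500000000000000000000 * s^18 + 5127661350000000000000000000000 * s^19
     + 258806362500000000000000000000 * s^20 + 6174000000000000000000000000 * s^21) * q^5
    + (1196302693608973731213516143965625 + 11408076082083501951983714020875000 * s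
     + 51610967947584940120745392314375000 * s^2 + 147203893787181892649136671850000000 * s^3
     + 296672279636651583357742643250000000 * s^4 + 448768274160101703776515398750000000 * s^5
     + 528226368608075646481511318750000000 * s^6 + 494934042117337624254066375000000000 * s^7
     + 374487153030005385302747812500000000 * s^8 + 230753616052354633876050000000000000 * s^9
     + 116227602348712599089625000000000000 * s^10 + 47834694700866606592500000000000000 * s^11
     + 16012800804656911193750000000000000 * s^12 + 4319750795370572625000000000000000 * s^13
     + 924922469345686875000000000000000 * s^14 + 153507407100337500000000000000000 * s^15
     + 19029721499250000000000000000000 * s^16 + 1657031591250000000000000000000 * s^17
     + 90314043750000000000000000000 * s^18 + 2315250000000000000000000000 * s^19) * p * q^4
    + (117177354471629424174868111718750 + 1011998053635184411869929437500000 * s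
     + 4107459605809411524134450156250000 * s^2 + 10404177481116403196820148437500000 * s^3
     + 18417771316421266874370292968750000 * s^4 + 24176588000775318983122031250000000 * s^5
     + 24363977299669414665099218750000000 * s^6 + 19248935017110077308968750000000000 * s^7
     + 12067233024141429754101562500000000 * s^8 + 6035223707733410750000000000000000 * s^9
     + 2407179713821302000000000000000000 * s^10 + 761018785953080156250000000000000 * s^11
     + 188271908232676953125000000000000 * s^12 + 35662337043046875000000000000000 * s^13
     + 4991146641796875000000000000000 * s^14 + 485916309375000000000000000000 * s^15
     + 29348894531250000000000000000 * s^16 + 826875000000000000000000000 * s^17) * p^2 * q^3
    + (7515294324270523682269199218750 + 56150071458954652615544531250000 * s
     + 195451688720443181856164062500000 * s^2 + 420385552833367160888320312500000 * s^3
     + 624674952082606127616503906250000 * s^4 + 679122463418085222949218750000000 * s^5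
     + 557856542184244843613281250000000 * s^6 + 352445261064232366406250000000000 * s^7
     + 172596215090973905273437500000000 * s^8 + 65481969289629375000000000000000 * s^9
     + 19078279504487109375000000000000 * s^10 + 4188837020238281250000000000000 * s^11
     + 670295362187500000000000000000 * s^12 + 73716595312500000000000000000 * s^13
     + 4975031250000000000000000000 * s^14 + 155039062500000000000000000 * s^15) * p^3 * q^2
    + (258005766863887915602978515625 + 1626213768254235383074218750000 * s
     + 4721334124100575796132812500000 * s^2 + 8357417939357506388085937500000 * s^3
     + 10059880224429160319824218750000 * s^4 + 8691713576191570722656250000000 * s^5
     + 5542699921120262988281250000000 * s^6 + 2639777139066703125000000000000 * s^7
     + 938244744289760742187500000000 * s^8 + 245567406410156250000000000000 * s^9
     + 45951144011718750000000000000 * s^10 + 5812939863281250000000000000 * s^11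
     + 444739599609375000000000000 * s^12 + 15503906250000000000000000 * s^13) * p^4 * q
    + (3698563000914510279541015625 + 18982925143029162451171875000 * s
     + 44189132181673751220703125000 * s^2 + 61550258738926733398437500000 * s^3
     + 56961490549240173339843750000 * s^4 + 36746455898844726562500000000 * s^5
     + 16845501378330078125000000000 * s^6 + 5481028649414062500000000000 * s^7
     + 1238552968139648437500000000 * s^8 + 184758471679687500000000000 * s^9
     + 16332934570312500000000000 * s^10 + 645996093750000000000000 * s^11) * p^5"

definition inner_ba7_cert :: "real \<Rightarrow> real \<Rightarrow> real \<Rightarrow> real" where
  "inner_ba7_cert s p q =
    (1364039214493638151400375 + 22989411806429874649387500 * s
     + 133279246491907972827937500 * s^2 + 423780595580304145510000000 * s^3
     + 874125607466923435462500000 * s^4 + 1269921977590104030150000000 * s^5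
     + 1360059026105114304375000000 * s^6 + 1101968183311153200000000000 * s^7
     + 684466906446154125000000000 * s^8 + 327039182476615000000000000 * s^9
     + 119513923527363750000000000 * s^10 + 32864760085500000000000000 * s^11
     + 6591975726875000000000000 * s^12 + 911475337500000000000000 * s^13
     + 77753812500000000000000 * s^14 + 3087000000000000000000 * s^15) * q^5
    + (1772131786285315237884375 + 12892430472199139405062500 * s
     + 43451753394864264550312500 * s^2 + 89803280753061362550000000 * s^3
     + 126942576472959758437500000 * s^4 + 129565977460164708750000000 * s^5
     + 98210467062913865625000000 * s^6 + 55961694098123625000000000 * s^7
     + 23965473571436250000000000 * s^8 + 7616436066750000000000000 * s^9
     + 1745683804593750000000000 * s^10 + 273200602500000000000000 * s^11
     + 26162325000000000000000 * s^12 + 1157625000000000000000 * s^13) * p * q^4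
    + (184584962009941875781250 + 1161689386333648265625000 * s + 3325326406679508984375000 * s^2
     + 5715064172374648437500000 * s^3 + 6552777158376503906250000 * s^4
     + 5263237291168828125000000 * s^5 + 3021990720555078125000000 * s^6
     + 1240395371250000000000000 * s^7 + 356691624023437500000000 * s^8
     + 68440558593750000000000 * s^9 + 7886320312500000000000 * s^10
     + 413437500000000000000 * s^11) * p^2 * q^3
    + (12199084793927363281250 + 62243325948882421875000 * s + 141320061701314453125000 * s^2
     + 187409602268164062500000 * s^3 + 159986852178808593750000 * s^4
     + 91180611333984375000000 * s^5 + 34695295537109375000000 * s^6
     + 8499930468750000000000 * s^7 + 1216625976562500000000 * s^8 + 77519531250000000000 * s^9) * p^3 * q^2
    + (427365199621240234375 + 1673488418416992187500 * s + 2815531042221679687500 * s^2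
     + 2638579036132812500000 * s^3 + 1487722902832031250000 * s^4 + 504725361328125000000 * s^5
     + 95406445312500000000 * s^6 + 7751953125000000000 * s^7) * p^4 * q
    + (6216405208740234375 + 16983937133789062500 * s + 18680322875976562500 * s^2
     + 10339526367187500000 * s^3 + 2880065917968750000 * s^4 + 322998046875000000 * s^5) * p^5"

lemma siems7_certs_nonneg:
  assumes "0 \<le> s" "0 \<le> p" "0 \<le> q"
  shows "0 \<le> norm2_a7_cert_left s p q" "0 \<le> norm2_a7_cert_right s p q"
    "0 \<le> norm2_ca7_cert s p q" "0 \<le> inner_ba7_cert s p q"
  unfolding norm2_a7_cert_left_def norm2_a7_cert_right_def norm2_ca7_cert_def inner_ba7_cert_def
  using assms by (intro add_nonneg_nonneg mult_nonneg_nonneg zero_le_power; simp)+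

lemma norm2_a7_ge_left:
  assumes "0 \<le> s" "-1 \<le> x" "x \<le> 0"
  shows "656250\<^sup>2 \<le> norm2_a7 s x"
proof -
  have "norm2_a7 s x - 656250\<^sup>2 = (1 - x) * norm2_a7_cert_left s (1 + x) (-x)"
    unfolding norm2_a7_def norm2_a7_cert_left_def by algebra
  moreover have "0 \<le> (1 - x) * norm2_a7_cert_left s (1 + x) (-x)"
    using assms siems7_certs_nonneg(1)[of s "1 + x" "-x"] by simp
  ultimately show ?thesis by simp
qed

lemma norm2_a7_ge_right:
  assumes "0 \<le> s" "0 \<le> x" "x \<le> 1"
  shows "656250\<^sup>2 \<le> norm2_a7 s x"
proof -
  have "norm2_a7 s x - 656250\<^sup>2 = (1 - x) * norm2_a7_cert_right s x (1 - x)"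
    unfolding norm2_a7_def norm2_a7_cert_right_def by algebra
  moreover have "0 \<le> (1 - x) * norm2_a7_cert_right s x (1 - x)"
    using assms siems7_certs_nonneg(2)[of s x "1 - x"] by simp
  ultimately show ?thesis by simp
qed

lemma norm2_a7_ge: "0 \<le> s \<Longrightarrow> -1 \<le> x \<Longrightarrow> x \<le> 1 \<Longrightarrow> 656250\<^sup>2 \<le> norm2_a7 s x"
  using norm2_a7_ge_left norm2_a7_ge_right by (cases "x \<le> 0") auto

lemma norm2_c7_norm2_a7_cross_le:
  assumes "0 \<le> s" "-1 \<le> x" "x \<le> 1"
  shows "(a7_re s (-1))\<^sup>2 * norm2_c7 s x \<le> (c7_re s (-1))\<^sup>2 * norm2_a7 s x"
proof -
  have "16 * ((c7_re s (-1))\<^sup>2 * norm2_a7 s x - (a7_re s (-1))\<^sup>2 * norm2_c7 s x)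
      = (1 + x) * norm2_ca7_cert s (1 + x) (1 - x)"
    unfolding a7_re_at_minus_1 c7_re_at_minus_1 norm2_a7_def norm2_c7_def norm2_ca7_cert_def
    by algebra
  moreover have "0 \<le> (1 + x) * norm2_ca7_cert s (1 + x) (1 - x)"
    using assms siems7_certs_nonneg(3)[of s "1 + x" "1 - x"] by simp
  ultimately show ?thesis by simp
qed

lemma inner_ba7_cross_ge:
  assumes "0 \<le> s" "-1 \<le> x" "x \<le> 1"
  shows "b7_re s (-1) * norm2_a7 s x \<le> a7_re s (-1) * inner_ba7 s x"
proof -
  have "16 * (a7_re s (-1) * inner_ba7 s x - b7_re s (-1) * norm2_a7 s x)
      = (1 + x) * inner_ba7_cert s (1 + x) (1 - x)"
    unfolding a7_re_at_minus_1 b7_re_def norm2_a7_def inner_ba7_def inner_ba7_cert_def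
    by algebra
  moreover have "0 \<le> (1 + x) * inner_ba7_cert s (1 + x) (1 - x)"
    using assms siems7_certs_nonneg(4)[of s "1 + x" "1 - x"] by simp
  ultimately show ?thesis by simp
qed

section \<open>Extremal values of a, b and c\<close>

lemma norm_a_fun_7_squared:
  "(cmod (a_fun 7 \<gamma> t))\<^sup>2 = norm2_a7 (\<gamma> - 11/5) (cos t) / 656250\<^sup>2"
  unfolding a_fun_7_eq cmod_Complex_sin_mult_squared norm2_a7_eq
  by (simp add: power_divide add_divide_distrib)

lemma norm_c_fun_7_squared:
  "(cmod (c_fun 7 \<gamma> t))\<^sup>2 = norm2_c7 (\<gamma> - 11/5) (cos t) / 15625\<^sup>2"
  unfolding c_fun_7_eq cmod_Complex_sin_mult_squared norm2_c7_eq
  by (simp add: power_divide add_divide_distrib)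

lemma Re_b_div_a_fun_7:
  "Re (b_fun 7 \<gamma> t / a_fun 7 \<gamma> t) = 42 * inner_ba7 (\<gamma> - 11/5) (cos t) / norm2_a7 (\<gamma> - 11/5) (cos t)"
proof -
  have "Re (b_fun 7 \<gamma> t) * Re (a_fun 7 \<gamma> t) + Im (b_fun 7 \<gamma> t) * Im (a_fun 7 \<gamma> t)
      = inner_ba7 (\<gamma> - 11/5) (cos t) / (15625 * 656250)"
    unfolding a_fun_7_eq b_fun_7_eq Re_Im_inner_Complex_sin_mult inner_ba7_eq
    by (simp add: field_simps)
  then show ?thesis by (simp add: Re_divide' norm_a_fun_7_squared)
qed

lemma a_fun_7_at_0: "a_fun 7 \<gamma> 0 = 1"
  by (simp add: a_fun_7_eq a7_re_at_1 complex_eq_iff)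

lemma siems7_at_pi:
  "a_fun 7 \<gamma> pi = of_real (a7_re (\<gamma> - 11/5) (-1) / 656250)"
  "b_fun 7 \<gamma> pi = of_real (b7_re (\<gamma> - 11/5) (-1) / 15625)"
  "c_fun 7 \<gamma> pi = of_real (c7_re (\<gamma> - 11/5) (-1) / 15625)"
  by (simp_all add: a_fun_7_eq b_fun_7_eq c_fun_7_eq complex_eq_iff)

lemma siems7_at_pi_closed_forms:
  "16 * (420*\<gamma>^6 - 1050*\<gamma>^4 + 1400*\<gamma>^3 - 840*\<gamma>^2 + 252*\<gamma> - 31)
     = 105 * (a7_re (\<gamma> - 11/5) (-1) / 656250)"
  "(1 - 2*\<gamma>)^6 = b7_re (\<gamma> - 11/5) (-1) / 15625"
  "64*\<gamma>^6 + 192*\<gamma>^5 - 240*\<gamma>^4 + 160*\<gamma>^3 - 60*\<gamma>^2 + 12*\<gamma> - 1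
     = c7_re (\<gamma> - 11/5) (-1) / 15625"
  unfolding a7_re_at_minus_1 b7_re_def c7_re_at_minus_1 by algebra+

lemma norm_a_fun_7_ge_1:
  assumes "11/5 \<le> \<gamma>"
  shows "1 \<le> cmod (a_fun 7 \<gamma> t)"
proof -
  have "656250\<^sup>2 \<le> norm2_a7 (\<gamma> - 11/5) (cos t)"
    using assms by (intro norm2_a7_ge) auto
  then have "1\<^sup>2 \<le> (cmod (a_fun 7 \<gamma> t))\<^sup>2"
    by (simp add: norm_a_fun_7_squared)
  then show ?thesis by (rule power2_le_imp_le) simp
qed

lemma norm_c_div_a_fun_7_le_at_pi:
  assumes "11/5 \<le> \<gamma>"
  shows "cmod (c_fun 7 \<gamma> t / a_fun 7 \<gamma> t) \<le> cmod (c_fun 7 \<gamma> pi / a_fun 7 \<gamma> pi)"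
proof -
  define s where "s = \<gamma> - 11/5"
  have s: "0 \<le> s" using assms by (simp add: s_def)
  have na: "0 < norm2_a7 s (cos t)" and ca: "0 < a7_re s (-1)"
    using norm2_a7_ge[OF s, of "cos t"] a7_re_at_minus_1_pos[OF s] by simp_all
  have "(cmod (c_fun 7 \<gamma> t / a_fun 7 \<gamma> t))\<^sup>2 = 42\<^sup>2 * norm2_c7 s (cos t) / norm2_a7 s (cos t)"
    by (simp add: norm_divide power_divide norm_a_fun_7_squared norm_c_fun_7_squared s_def)
  also have "\<dots> \<le> 42\<^sup>2 * (c7_re s (-1))\<^sup>2 / (a7_re s (-1))\<^sup>2"
    using norm2_c7_norm2_a7_cross_le[OF s, of "cos t"] na ca by (simp add: field_simps)
  also have "\<dots> = (cmod (c_fun 7 \<gamma> pi / a_fun 7 \<gamma> pi))\<^sup>2"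
    by (simp add: siems7_at_pi norm_divide power_divide s_def)
  finally show ?thesis by (rule power2_le_imp_le) simp
qed

lemma Re_b_div_a_fun_7_ge_at_pi:
  assumes "11/5 \<le> \<gamma>"
  shows "Re (b_fun 7 \<gamma> pi / a_fun 7 \<gamma> pi) \<le> Re (b_fun 7 \<gamma> t / a_fun 7 \<gamma> t)"
proof -
  define s where "s = \<gamma> - 11/5"
  have s: "0 \<le> s" using assms by (simp add: s_def)
  have na: "0 < norm2_a7 s (cos t)" and ca: "0 < a7_re s (-1)"
    using norm2_a7_ge[OF s, of "cos t"] a7_re_at_minus_1_pos[OF s] by simp_all
  have "Re (b_fun 7 \<gamma> pi / a_fun 7 \<gamma> pi) = 42 * b7_re s (-1) / a7_re s (-1)"
    by (simp add: siems7_at_pi s_def)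
  also have "\<dots> \<le> 42 * inner_ba7 s (cos t) / norm2_a7 s (cos t)"
    using inner_ba7_cross_ge[OF s, of "cos t"] na ca by (simp add: field_simps)
  also have "\<dots> = Re (b_fun 7 \<gamma> t / a_fun 7 \<gamma> t)"
    by (simp add: Re_b_div_a_fun_7 s_def)
  finally show ?thesis .
qed

lemma sigma_F_7:
  assumes "11/5 \<le> \<gamma>"
  shows "sigma_F 7 \<gamma> = 1"
  unfolding sigma_F_def using norm_a_fun_7_ge_1[OF assms]
  by (intro cSup_eq_maximum)
    (auto simp: a_fun_7_at_0 norm_divide divide_le_eq_1 intro!: image_eqI[where x = 0])

lemma sigma_E_7: "11/5 \<le> \<gamma> \<Longrightarrow> sigma_E 7 \<gamma> = cmod (c_fun 7 \<gamma> pi / a_fun 7 \<gamma> pi)"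
  unfolding sigma_E_def
  by (rule cSup_eq_maximum)
    (auto simp: norm_c_div_a_fun_7_le_at_pi intro!: image_eqI[where x = pi])

lemma lambda_I_7: "11/5 \<le> \<gamma> \<Longrightarrow> lambda_I 7 \<gamma> = Re (b_fun 7 \<gamma> pi / a_fun 7 \<gamma> pi)"
  unfolding lambda_I_def
  by (rule cInf_eq_minimum)
    (auto simp: Re_b_div_a_fun_7_ge_at_pi intro!: image_eqI[where x = pi])

theorem mainTheorem14:
  fixes \<gamma> :: real
  assumes "11/5 \<le> \<gamma>" and "\<gamma> \<le> 9"
  shows "sigma_F 7 \<gamma> = 1
    \<and> sigma_E 7 \<gamma> = cmod (c_fun 7 \<gamma> pi) / cmod (a_fun 7 \<gamma> pi)
    \<and> lambda_I 7 \<gamma> = 105 * (1 - 2*\<gamma>)^6 /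
        (16 * (420*\<gamma>^6 - 1050*\<gamma>^4 + 1400*\<gamma>^3 - 840*\<gamma>^2 + 252*\<gamma> - 31))
    \<and> I_IE 7 \<gamma> = (1 - 2*\<gamma>)^6 /
        (64*\<gamma>^6 + 192*\<gamma>^5 - 240*\<gamma>^4 + 160*\<gamma>^3 - 60*\<gamma>^2 + 12*\<gamma> - 1)"
proof -
  have s: "0 \<le> \<gamma> - 11/5" using assms(1) by simp
  show ?thesis
    unfolding siems7_at_pi_closed_forms I_IE_def
    using sigma_F_7[OF assms(1)] sigma_E_7[OF assms(1)] lambda_I_7[OF assms(1)]
      a7_re_at_minus_1_pos[OF s] c7_re_at_minus_1_pos[OF s]
    by (simp add: siems7_at_pi norm_divide)
qed

end
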